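(* Let $W\in L^\infty$ and $(X_t)_{t\in\mathbb{T}}\in\mathcal{A}(W)$. Then $(X_t)$ is Pareto optimal if and only if there exists $(\lambda_1,\dots,\lambda_T)\in(0,\infty)^T$ such that $(\lambda_t u_t'(\tilde X_t))_{t\in\mathbb{T}}$ is an $(\mathcal{F}_t)$-martingale.
   Context: Let $T\ge 1$ be an integer and $\mathbb{T}=\{1,\dots,T\}$. Let $(\Omega,\mathcal{F},(\mathcal{F}_t)_{t\in\{0,1,\dots,T\}},P)$ be a filtered probability space and $L^{\infty}=L^{\infty}(\Omega,\mathcal{F}_T,P)$. Let $(r_t)_{t\in\mathbb{T}}$ be a bounded, nonnegative, predictable process ($r_t$ is $\mathcal{F}_{t-1}$-measurable), $B_0=1$, $B_t=\prod_{k=1}^t(1+r_k)$, and for a process $(X_t)$ write $\tilde X_t=X_t/B_t$. For $W\in L^\infty$, $\mathcal{A}(W)$ is the set of $(\mathcal{F}_t)$-adapted processes $(Y_t)_{t\in\mathbb{T}}$ with $Y_t\in L^\infty$ for all $t$ and $\sum_{t\in\mathbb{T}}\tilde Y_t=W$ a.s. For each $t\in\mathbb{T}$, $u_t:\mathbb{R}\to\mathbb{R}$ is strictly concave, $C^1$, with $u_t'(x)>0$ for all $x$. An allocation $(X_t)\in\mathcal{A}(W)$ is Pareto optimal if there is no $(Y_t)\in\mathcal{A}(W)$ with $E[u_t(\tilde Y_t)]\ge E[u_t(\tilde X_t)]$ for all $t\in\mathbb{T}$ and $E[u_{t_0}(\tilde Y_{t_0})]>E[u_{t_0}(\tilde X_{t_0})]$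 for at least one $t_0\in\mathbb{T}$. *)

theory Defs
  imports "HOL-Probability.Probability"
begin

definition strictly_concave_on :: "real set \<Rightarrow> (real \<Rightarrow> real) \<Rightarrow> bool" where
  "strictly_concave_on S f \<longleftrightarrow> convex S \<and>
     (\<forall>x\<in>S. \<forall>y\<in>S. \<forall>a::real. x \<noteq> y \<longrightarrow> 0 < a \<longrightarrow> a < 1 \<longrightarrow>
        f (a * x + (1 - a) * y) > a * f x + (1 - a) * f y)"

definition filtration_upto :: "'a measure \<Rightarrow> (nat \<Rightarrow> 'a measure) \<Rightarrow> nat \<Rightarrow> bool" where
  "filtration_upto M F T \<longleftrightarrow>
     (\<forall>t\<le>T. subalgebra M (F t)) \<and> (\<forall>s t. s \<le> t \<longrightarrow> t \<le> T \<longrightarrow> sets (F s) \<subseteq> sets (F t))"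

definition Linfty :: "'a measure \<Rightarrow> 'a measure \<Rightarrow> ('a \<Rightarrow> real) \<Rightarrow> bool" where
  "Linfty M G X \<longleftrightarrow> X \<in> borel_measurable G \<and> (\<exists>C. AE x in M. \<bar>X x\<bar> \<le> C)"

definition disc :: "(nat \<Rightarrow> 'a \<Rightarrow> real) \<Rightarrow> nat \<Rightarrow> 'a \<Rightarrow> real" where
  "disc r t x = (\<Prod>k\<in>{1..t}. 1 + r k x)"

definition allocations :: "'a measure \<Rightarrow> (nat \<Rightarrow> 'a measure) \<Rightarrow> nat \<Rightarrow> (nat \<Rightarrow> 'a \<Rightarrow> real)
    \<Rightarrow> ('a \<Rightarrow> real) \<Rightarrow> (nat \<Rightarrow> 'a \<Rightarrow> real) set" where
  "allocations M F T r W = {Y. (\<forall>t\<in>{1..T}. Linfty M (F t) (Y t)) \<and>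
      (AE x in M. (\<Sum>t\<in>{1..T}. Y t x / disc r t x) = W x)}"

definition pareto_optimal :: "'a measure \<Rightarrow> (nat \<Rightarrow> 'a measure) \<Rightarrow> nat \<Rightarrow> (nat \<Rightarrow> 'a \<Rightarrow> real)
    \<Rightarrow> (nat \<Rightarrow> real \<Rightarrow> real) \<Rightarrow> ('a \<Rightarrow> real) \<Rightarrow> (nat \<Rightarrow> 'a \<Rightarrow> real) \<Rightarrow> bool" where
  "pareto_optimal M F T r u W X \<longleftrightarrow> X \<in> allocations M F T r W \<and>
     \<not> (\<exists>Y \<in> allocations M F T r W.
          (\<forall>t\<in>{1..T}. (\<integral>x. u t (Y t x / disc r t x) \<partial>M) \<ge> (\<integral>x. u t (X t x / disc r t x) \<partial>M)) \<and>
          (\<exists>t0\<in>{1..T}. (\<integral>x. u t0 (Y t0 x / disc r t0 x) \<partial>M) > (\<integral>x. u t0 (X t0 x / disc r t0 x) \<partial>M)))"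

definition martingale_upto :: "'a measure \<Rightarrow> (nat \<Rightarrow> 'a measure) \<Rightarrow> nat \<Rightarrow> (nat \<Rightarrow> 'a \<Rightarrow> real) \<Rightarrow> bool" where
  "martingale_upto M F T Z \<longleftrightarrow>
     (\<forall>t\<in>{1..T}. integrable M (Z t) \<and> Z t \<in> borel_measurable (F t)) \<and>
     (\<forall>s\<in>{1..T}. \<forall>t\<in>{1..T}. s \<le> t \<longrightarrow> (AE x in M. real_cond_exp M (F s) (Z t) x = Z s x))"

end

theory Submission
  imports Defs
begin

text \<open>
  Write \<open>X\<^sup>~\<^sub>t = X\<^sub>t / B\<^sub>t\<close> for discounted consumption and \<open>m\<^sub>t = u'\<^sub>t(X\<^sup>~\<^sub>t)\<close> for the
  marginal utilities.  Sufficiency: if \<open>(\<lambda>\<^sub>t m\<^sub>t)\<close> is a martingale, the tangent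
  inequality of the concave \<open>u\<^sub>t\<close> and the tower property give, for every competing
  allocation \<open>Y\<close>, \<open>\<Sum>\<^sub>t \<lambda>\<^sub>t (E u\<^sub>t(Y\<^sup>~\<^sub>t) - E u\<^sub>t(X\<^sup>~\<^sub>t)) \<le> E[\<lambda>\<^sub>T m\<^sub>T \<Sum>\<^sub>t (Y\<^sup>~\<^sub>t - X\<^sup>~\<^sub>t)] = 0\<close>,
  so \<open>Y\<close> cannot dominate \<open>X\<close>.  Necessity: for \<open>s < t\<close> and a bounded
  \<open>F\<^sub>s\<close>-measurable \<open>Z\<close>, shifting the small discounted amount \<open>Z/n\<close> from agent \<open>t\<close>
  to agent \<open>s\<close> is a feasible reallocation; if \<open>E[Z m\<^sub>s] > 0 > E[Z m\<^sub>t]\<close> it strictly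
  improves both agents.  Testing with \<open>Z = \<alpha> 1\<^sub>A + \<beta>\<close>, \<open>A \<in> F\<^sub>s\<close>, forces
  \<open>E[1\<^sub>A m\<^sub>t]/E m\<^sub>t = E[1\<^sub>A m\<^sub>s]/E m\<^sub>s\<close>, i.e. \<open>(m\<^sub>t / E m\<^sub>t)\<close> is a martingale.
\<close>

section \<open>Bounded random variables\<close>

lemma Linfty_measurable: "Linfty M G f \<Longrightarrow> f \<in> borel_measurable G"
  unfolding Linfty_def by blast

lemma Linfty_add: "Linfty M G f \<Longrightarrow> Linfty M G g \<Longrightarrow> Linfty M G (\<lambda>x. f x + g x)"
  unfolding Linfty_def
proof (elim conjE exE, intro conjI)
  fix C1 C2 assume "f \<in> borel_measurable G" "g \<in> borel_measurable G"
    "AE x in M. \<bar>f x\<bar> \<le> C1" "AE x in M. \<bar>g x\<bar> \<le> C2"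
  then show "(\<lambda>x. f x + g x) \<in> borel_measurable G" "\<exists>C. AE x in M. \<bar>f x + g x\<bar> \<le> C"
    by (auto intro!: exI[of _ "C1 + C2"] elim!: eventually_elim2)
qed

lemma Linfty_mult: "Linfty M G f \<Longrightarrow> Linfty M G g \<Longrightarrow> Linfty M G (\<lambda>x. f x * g x)"
  unfolding Linfty_def
proof (elim conjE exE, intro conjI)
  fix C1 C2 assume "f \<in> borel_measurable G" "g \<in> borel_measurable G"
    "AE x in M. \<bar>f x\<bar> \<le> C1" "AE x in M. \<bar>g x\<bar> \<le> C2"
  then show "(\<lambda>x. f x * g x) \<in> borel_measurable G" "\<exists>C. AE x in M. \<bar>f x * g x\<bar> \<le> C"
    by (auto intro!: exI[of _ "C1 * C2"] elim!: eventually_elim2 simp: abs_mult mult_mono')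
qed

lemma Linfty_const: "Linfty M G (\<lambda>x. c)"
  unfolding Linfty_def by auto

lemma Linfty_cmult: "Linfty M G f \<Longrightarrow> Linfty M G (\<lambda>x. c * f x)"
  using Linfty_mult[OF Linfty_const] by blast

lemma Linfty_uminus: "Linfty M G f \<Longrightarrow> Linfty M G (\<lambda>x. - f x)"
  using Linfty_cmult[of M G f "-1"] by simp

lemma Linfty_diff: "Linfty M G f \<Longrightarrow> Linfty M G g \<Longrightarrow> Linfty M G (\<lambda>x. f x - g x)"
  using Linfty_add[OF _ Linfty_uminus, of M G f g] by simp

lemma Linfty_indicator: "A \<in> sets G \<Longrightarrow> Linfty M G (indicator A :: _ \<Rightarrow> real)"
  unfolding Linfty_def by (auto intro!: exI[of _ 1] split: split_indicator)

lemma continuous_bounded_on_interval: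
  fixes h :: "real \<Rightarrow> real"
  assumes "continuous_on UNIV h"
  obtains B where "\<And>y. \<bar>y\<bar> \<le> K \<Longrightarrow> \<bar>h y\<bar> \<le> B"
proof -
  have "compact (h ` {-K..K})"
    by (rule compact_continuous_image) (auto intro: continuous_on_subset[OF assms])
  then obtain B where "\<forall>z\<in>h ` {-K..K}. norm z \<le> B"
    using compact_imp_bounded bounded_iff by metis
  then show ?thesis by (intro that[of B]) (auto simp: abs_le_iff)
qed

lemma Linfty_comp:
  assumes "continuous_on UNIV h" "Linfty M G f"
  shows "Linfty M G (\<lambda>x. h (f x))"
proof -
  obtain K where f: "f \<in> borel_measurable G" "AE x in M. \<bar>f x\<bar> \<le> K"
    using assms(2) unfolding Linfty_def by blast
  obtain B where "\<And>y. \<bar>y\<bar> \<le> K \<Longrightarrow> \<bar>h y\<bar> \<le> B"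
    using continuous_bounded_on_interval[OF assms(1)] by blast
  then show ?thesis unfolding Linfty_def
    using borel_measurable_continuous_on[OF assms(1) f(1)] f(2)
    by (auto intro!: exI[of _ B] elim!: eventually_mono)
qed

lemma Linfty_div:
  assumes "Linfty M G f" "g \<in> borel_measurable G" "AE x in M. g x \<ge> 1"
  shows "Linfty M G (\<lambda>x. f x / g x)"
proof -
  obtain K where f: "f \<in> borel_measurable G" "AE x in M. \<bar>f x\<bar> \<le> K"
    using assms(1) unfolding Linfty_def by blast
  have "\<bar>f x / g x\<bar> \<le> K" if "\<bar>f x\<bar> \<le> K" "1 \<le> g x" for x
  proof -
    have "\<bar>f x\<bar> * 1 \<le> \<bar>f x\<bar> * g x" using \<open>1 \<le> g x\<close> by (rule mult_left_mono) auto
    then have "\<bar>f x / g x\<bar> \<le> \<bar>f x\<bar>" using \<open>1 \<le> g x\<close> by (simp add: abs_div divide_le_eq)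
    then show ?thesis using that by linarith
  qed
  then have "AE x in M. \<bar>f x / g x\<bar> \<le> K"
    using f(2) assms(3) by (auto elim!: eventually_elim2)
  then show ?thesis unfolding Linfty_def using f(1) assms(2) by auto
qed

lemma Linfty_subalgebra: "subalgebra G' G \<Longrightarrow> Linfty M G f \<Longrightarrow> Linfty M G' f"
  using measurable_from_subalg unfolding Linfty_def by blast

lemma Linfty_integrable:
  assumes "prob_space M" "Linfty M M f"
  shows "integrable M f"
proof -
  interpret prob_space M by fact
  obtain K where "f \<in> borel_measurable M" "AE x in M. \<bar>f x\<bar> \<le> K"
    using assms(2) unfolding Linfty_def by blast
  then show ?thesis by (intro integrable_const_bound[of _ K]) auto
qed

section \<open>The tangent inequality\<close>

text \<open>A differentiable strictly concave function lies below each of its tangents;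
  this is the only consequence of concavity used in the whole development.\<close>
lemma strictly_concave_tangent:
  fixes v :: "real \<Rightarrow> real"
  assumes conc: "strictly_concave_on UNIV v" and der: "(v has_real_derivative d) (at x)"
  shows "v y \<le> v x + d * (y - x)"
proof -
  have "convex_on UNIV (\<lambda>z. - v z)"
  proof (rule convex_onI)
    fix a z w :: real assume a: "0 < a" "a < 1"
    have comb: "(1 - a) *\<^sub>R z + a *\<^sub>R w = a * w + (1 - a) * z" by (simp add: algebra_simps)
    show "- v ((1 - a) *\<^sub>R z + a *\<^sub>R w) \<le> (1 - a) * - v z + a * - v w"
    proof (cases "z = w")
      case False
      then have "v (a * w + (1 - a) * z) > a * v w + (1 - a) * v z"
        using conc a unfolding strictly_concave_on_def by simp
      then show ?thesis unfolding comb by simp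
    qed (simp add: algebra_simps)
  qed simp
  moreover have "((\<lambda>z. - v z) has_field_derivative - d) (at x within UNIV)"
    using der by (auto intro!: derivative_eq_intros)
  ultimately have "- v y - - v x \<ge> - d * (y - x)"
    by (intro convex_on_imp_above_tangent) auto
  then show ?thesis by simp
qed


lemma (in sigma_finite_subalgebra) integral_mult_cond_exp_eq:
  assumes D: "D \<in> borel_measurable F" and Z': "Z' \<in> borel_measurable M"
    and Z: "Z \<in> borel_measurable M"
    and cond: "AE x in M. real_cond_exp M F Z x = Z' x"
    and int: "integrable M (\<lambda>x. D x * Z x)"
  shows "(\<integral>x. D x * Z' x \<partial>M) = (\<integral>x. D x * Z x \<partial>M)"
proof -
  have "D \<in> borel_measurable M" using D by (rule measurable_from_subalg[OF subalg])
  then have "(\<integral>x. D x * Z' x \<partial>M) = (\<integral>x. D x * real_cond_exp M F Z x \<partial>M)"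
    using Z' cond by (intro integral_cong_AE) (auto elim: eventually_mono)
  also have "\<dots> = (\<integral>x. D x * Z x \<partial>M)"
    by (rule real_cond_exp_intg(2)[OF int D Z])
  finally show ?thesis .
qed

text \<open>The directional derivative of \<open>g \<mapsto> E v(g)\<close> in direction \<open>Z\<close>, computed along
  the sequence of step sizes \<open>1/(n+1)\<close>, is \<open>E[Z v'(g)]\<close> (dominated convergence).\<close>
lemma perturbed_marginal_tendsto:
  fixes v' :: "real \<Rightarrow> real"
  assumes prob: "prob_space M" and Lg: "Linfty M M g" and LZ: "Linfty M M Z"
    and cont: "continuous_on UNIV v'"
  shows "(\<lambda>n. \<integral>x. Z x * v' (g x + Z x / real (Suc n)) \<partial>M) \<longlonglongrightarrow> (\<integral>x. Z x * v' (g x) \<partial>M)"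
proof -
  obtain Kg where Kg: "AE x in M. \<bar>g x\<bar> \<le> Kg" using Lg unfolding Linfty_def by blast
  obtain Kz where Kz: "AE x in M. \<bar>Z x\<bar> \<le> Kz" using LZ unfolding Linfty_def by blast
  obtain B where B: "\<And>y. \<bar>y\<bar> \<le> Kg + Kz \<Longrightarrow> \<bar>v' y\<bar> \<le> B"
    using continuous_bounded_on_interval[OF cont] by blast
  show ?thesis
  proof (rule integral_dominated_convergence[where w="\<lambda>x. Kz * B"])
    have Lpert: "Linfty M M (\<lambda>x. g x + Z x / real (Suc n))" for n
      using Linfty_add[OF Lg Linfty_mult[OF LZ Linfty_const[of M M "1 / real (Suc n)"]]] by simp
    show "(\<lambda>x. Z x * v' (g x + Z x / real (Suc n))) \<in> borel_measurable M" for n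
      using Linfty_mult[OF LZ Linfty_comp[OF cont Lpert]] by (rule Linfty_measurable)
    show "(\<lambda>x. Z x * v' (g x)) \<in> borel_measurable M"
      using Linfty_mult[OF LZ Linfty_comp[OF cont Lg]] by (rule Linfty_measurable)
    show "integrable M (\<lambda>x. Kz * B)"
      using prob by (simp add: prob_space.finite_measure finite_measure.integrable_const)
    show "AE x in M. (\<lambda>n. Z x * v' (g x + Z x / real (Suc n))) \<longlonglongrightarrow> Z x * v' (g x)"
    proof (rule AE_I2)
      fix x
      have "(\<lambda>n. g x + Z x / real (Suc n)) \<longlonglongrightarrow> g x + 0"
        using LIMSEQ_Suc[OF lim_const_over_n[of "Z x"]] by (intro tendsto_add tendsto_const) simp
      then have "(\<lambda>n. v' (g x + Z x / real (Suc n))) \<longlonglongrightarrow> v' (g x)"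
        using isCont_tendsto_compose[of "g x" v'] cont by (simp add: continuous_on_eq_continuous_at)
      then show "(\<lambda>n. Z x * v' (g x + Z x / real (Suc n))) \<longlonglongrightarrow> Z x * v' (g x)"
        by (intro tendsto_mult tendsto_const)
    qed
    show "AE x in M. norm (Z x * v' (g x + Z x / real (Suc n))) \<le> Kz * B" for n
      using Kg Kz
    proof eventually_elim
      case (elim x)
      have "\<bar>Z x\<bar> * 1 \<le> \<bar>Z x\<bar> * (1 + real n)" by (rule mult_left_mono) auto
      then have "\<bar>Z x / real (Suc n)\<bar> \<le> \<bar>Z x\<bar>" by (simp add: abs_div divide_le_eq)
      then have "\<bar>v' (g x + Z x / real (Suc n))\<bar> \<le> B" using elim by (intro B) linarith
      then show ?case using elim by (simp add: abs_mult mult_mono')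
    qed
  qed
qed

lemma small_perturbation_improves:
  fixes v v' :: "real \<Rightarrow> real"
  assumes prob: "prob_space M" and Lg: "Linfty M M g" and LZ: "Linfty M M Z"
    and conc: "strictly_concave_on UNIV v" and der: "\<And>y. (v has_real_derivative v' y) (at y)"
    and cont: "continuous_on UNIV v'"
    and pos: "0 < (\<integral>x. Z x * v' (g x) \<partial>M)"
  shows "eventually (\<lambda>n. (\<integral>x. v (g x + Z x / real (Suc n)) \<partial>M) > (\<integral>x. v (g x) \<partial>M)) sequentially"
proof -
  have v_cont: "continuous_on UNIV v"
    using der by (meson DERIV_isCont continuous_at_imp_continuous_on)
  have "eventually (\<lambda>n. (\<integral>x. Z x * v' (g x + Z x / real (Suc n)) \<partial>M) > 0) sequentially"
    using perturbed_marginal_tendsto[OF prob Lg LZ cont] pos by (rule order_tendstoD(1))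
  then show ?thesis
  proof (rule eventually_mono)
    fix n
    define h where "h x = Z x / real (Suc n)" for x
    assume "(\<integral>x. Z x * v' (g x + Z x / real (Suc n)) \<partial>M) > 0"
    then have "0 < (\<integral>x. h x * v' (g x + h x) \<partial>M)"
      by (simp add: h_def)
    have Lh: "Linfty M M h"
      unfolding h_def using Linfty_mult[OF LZ Linfty_const[of M M "1 / real (Suc n)"]] by simp
    have Lgh: "Linfty M M (\<lambda>x. g x + h x)" by (rule Linfty_add[OF Lg Lh])
    have int_gh: "integrable M (\<lambda>x. v (g x + h x))" and int_g: "integrable M (\<lambda>x. v (g x))"
      by (intro Linfty_integrable[OF prob] Linfty_comp[OF v_cont] Lgh Lg)+
    have int_d: "integrable M (\<lambda>x. h x * v' (g x + h x))"
      by (intro Linfty_integrable[OF prob] Linfty_mult Lh Linfty_comp[OF cont Lgh])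
    have tangent: "h x * v' (g x + h x) \<le> v (g x + h x) - v (g x)" for x
      using strictly_concave_tangent[OF conc der[of "g x + h x"], of "g x"] by (simp add: algebra_simps)
    have "0 < (\<integral>x. h x * v' (g x + h x) \<partial>M)" by fact
    also have "\<dots> \<le> (\<integral>x. v (g x + h x) - v (g x) \<partial>M)"
      using int_d int_gh int_g tangent by (intro integral_mono) auto
    also have "\<dots> = (\<integral>x. v (g x + h x) \<partial>M) - (\<integral>x. v (g x) \<partial>M)"
      using int_gh int_g by simp
    finally show "(\<integral>x. v (g x + Z x / real (Suc n)) \<partial>M) > (\<integral>x. v (g x) \<partial>M)"
      by (simp add: h_def)
  qed
qed


section \<open>The risk-sharing model\<close>

locale risk_sharing =
  fixes M :: "'a measure" and F :: "nat \<Rightarrow> 'a measure" and T :: nat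
    and r :: "nat \<Rightarrow> 'a \<Rightarrow> real" and u u' :: "nat \<Rightarrow> real \<Rightarrow> real"
  assumes prob: "prob_space M"
    and T_pos: "T \<ge> 1"
    and filt: "filtration_upto M F T"
    and r_pred: "\<forall>t\<in>{1..T}. r t \<in> borel_measurable (F (t - 1))"
    and r_bdd: "\<exists>C. \<forall>t\<in>{1..T}. AE x in M. \<bar>r t x\<bar> \<le> C"
    and r_nonneg: "\<forall>t\<in>{1..T}. AE x in M. r t x \<ge> 0"
    and u_conc: "\<forall>t\<in>{1..T}. strictly_concave_on UNIV (u t)"
    and u_deriv: "\<forall>t\<in>{1..T}. \<forall>y. (u t has_real_derivative u' t y) (at y)"
    and u'_cont: "\<forall>t\<in>{1..T}. continuous_on UNIV (u' t)"
    and u'_pos: "\<forall>t\<in>{1..T}. \<forall>y. u' t y > 0"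
begin

abbreviation discounted :: "(nat \<Rightarrow> 'a \<Rightarrow> real) \<Rightarrow> nat \<Rightarrow> 'a \<Rightarrow> real" where
  "discounted Y t x \<equiv> Y t x / disc r t x"

abbreviation marginal :: "(nat \<Rightarrow> 'a \<Rightarrow> real) \<Rightarrow> nat \<Rightarrow> 'a \<Rightarrow> real" where
  "marginal Y t x \<equiv> u' t (discounted Y t x)"

abbreviation expected_utility :: "(nat \<Rightarrow> 'a \<Rightarrow> real) \<Rightarrow> nat \<Rightarrow> real" where
  "expected_utility Y t \<equiv> \<integral>x. u t (discounted Y t x) \<partial>M"

lemma subalg: "t \<le> T \<Longrightarrow> subalgebra M (F t)"
  using filt unfolding filtration_upto_def by auto

lemma subalg_mono: "s \<le> t \<Longrightarrow> t \<le> T \<Longrightarrow> subalgebra (F t) (F s)"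
  using filt unfolding filtration_upto_def subalgebra_def by (metis order.trans)

lemma cond_exp_subalgebra: "t \<le> T \<Longrightarrow> sigma_finite_subalgebra M (F t)"
  by (rule finite_measure_subalgebra_is_sigma_finite)
    (use prob subalg prob_space.finite_measure in
      \<open>auto simp: finite_measure_subalgebra_def finite_measure_subalgebra_axioms_def\<close>)

lemma Linfty_M: "t \<le> T \<Longrightarrow> Linfty M (F t) f \<Longrightarrow> Linfty M M f"
  using Linfty_subalgebra subalg by blast

lemma Linfty_mono: "s \<le> t \<Longrightarrow> t \<le> T \<Longrightarrow> Linfty M (F s) f \<Longrightarrow> Linfty M (F t) f"
  using Linfty_subalgebra subalg_mono by blast

lemma Linfty_integrable_F: "t \<le> T \<Longrightarrow> Linfty M (F t) f \<Longrightarrow> integrable M f"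
  using Linfty_integrable[OF prob] Linfty_M by blast

lemma u_cont: "t \<in> {1..T} \<Longrightarrow> continuous_on UNIV (u t)"
  using u_deriv by (meson DERIV_isCont continuous_at_imp_continuous_on)

text \<open>Properties of the discount factor \<open>B\<^sub>t\<close>: it is \<open>F\<^sub>t\<close>-measurable (the rates
  are predictable), at least \<open>1\<close> (the rates are nonnegative) and bounded.\<close>
lemma disc_measurable: "t \<le> T \<Longrightarrow> disc r t \<in> borel_measurable (F t)"
proof -
  assume tT: "t \<le> T"
  have "r k \<in> borel_measurable (F t)" if "k \<in> {1..t}" for k
  proof -
    have "r k \<in> borel_measurable (F (k - 1))" using r_pred that tT by auto
    moreover have "k - 1 \<le> t" using that by auto
    ultimately show ?thesis using measurable_from_subalg[OF subalg_mono[OF _ tT]] by blast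
  qed
  then show ?thesis unfolding disc_def[abs_def] by measurable
qed

lemma disc_bounds:
  obtains C where "AE x in M. \<forall>t\<le>T. 1 \<le> disc r t x \<and> disc r t x \<le> C"
proof -
  obtain C0 where C0: "\<forall>t\<in>{1..T}. AE x in M. \<bar>r t x\<bar> \<le> C0" using r_bdd by blast
  have "AE x in M. \<forall>k\<in>{1..T}. 0 \<le> r k x \<and> r k x \<le> C0"
  proof (rule AE_finite_allI)
    fix k assume k: "k \<in> {1..T}"
    show "AE x in M. 0 \<le> r k x \<and> r k x \<le> C0"
      using C0[rule_format, OF k] r_nonneg[rule_format, OF k] by eventually_elim auto
  qed simp
  then have "AE x in M. \<forall>t\<le>T. 1 \<le> disc r t x \<and> disc r t x \<le> (1 + C0) ^ T"
  proof (rule eventually_mono, intro allI impI conjI)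
    fix x t assume r: "\<forall>k\<in>{1..T}. 0 \<le> r k x \<and> r k x \<le> C0" and "t \<le> T"
    then show "1 \<le> disc r t x" unfolding disc_def by (intro prod_ge_1) auto
    have "disc r t x \<le> (\<Prod>k\<in>{1..t}. 1 + C0)"
      unfolding disc_def using r \<open>t \<le> T\<close> by (intro prod_mono) auto
    also have "\<dots> \<le> (1 + C0) ^ T"
    proof -
      have "0 \<le> C0" using r T_pos by (metis atLeastAtMost_iff order.refl order.trans)
      then show ?thesis using \<open>t \<le> T\<close> by (simp add: power_increasing)
    qed
    finally show "disc r t x \<le> (1 + C0) ^ T" .
  qed
  then show ?thesis by (rule that)
qed

lemma disc_ge_1: "AE x in M. \<forall>t\<le>T. disc r t x \<ge> 1"
proof -
  obtain C where "AE x in M. \<forall>t\<le>T. 1 \<le> disc r t x \<and> disc r t x \<le> C" by (rule disc_bounds)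
  then show ?thesis by (rule eventually_mono) auto
qed

lemma disc_Linfty: "t \<le> T \<Longrightarrow> Linfty M (F t) (disc r t)"
proof -
  assume "t \<le> T"
  obtain C where "AE x in M. \<forall>t\<le>T. 1 \<le> disc r t x \<and> disc r t x \<le> C" by (rule disc_bounds)
  then have "AE x in M. \<bar>disc r t x\<bar> \<le> C"
    by (rule eventually_mono) (use \<open>t \<le> T\<close> in force)
  then show ?thesis unfolding Linfty_def using disc_measurable[OF \<open>t \<le> T\<close>] by blast
qed

lemma discounted_Linfty:
  assumes "Y \<in> allocations M F T r W" "t \<in> {1..T}"
  shows "Linfty M (F t) (\<lambda>x. discounted Y t x)"
proof (rule Linfty_div)
  show "Linfty M (F t) (Y t)" using assms unfolding allocations_def by auto
  show "disc r t \<in> borel_measurable (F t)" using assms by (intro disc_measurable) auto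
  show "AE x in M. 1 \<le> disc r t x"
    using disc_ge_1 by (rule eventually_mono) (use assms in auto)
qed

lemma marginal_Linfty:
  assumes "Y \<in> allocations M F T r W" "t \<in> {1..T}"
  shows "Linfty M (F t) (\<lambda>x. marginal Y t x)"
  using Linfty_comp[OF _ discounted_Linfty[OF assms]] u'_cont assms(2) by auto

lemma utility_integrable:
  assumes "Y \<in> allocations M F T r W" "t \<in> {1..T}"
  shows "integrable M (\<lambda>x. u t (discounted Y t x))"
  using Linfty_integrable_F Linfty_comp[OF u_cont discounted_Linfty[OF assms]] assms(2) by auto

section \<open>Sufficiency of the martingale condition\<close>

lemma expected_utility_tangent:
  assumes X: "X \<in> allocations M F T r W" and Y: "Y \<in> allocations M F T r W"
    and t: "t \<in> {1..T}"
  shows "expected_utility Y t - expected_utility X t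
    \<le> (\<integral>x. (discounted Y t x - discounted X t x) * marginal X t x \<partial>M)"
proof -
  have "integrable M (\<lambda>x. (discounted Y t x - discounted X t x) * marginal X t x)"
    using t Linfty_mult[OF Linfty_diff[OF discounted_Linfty[OF Y t] discounted_Linfty[OF X t]]
        marginal_Linfty[OF X t]]
    by (intro Linfty_integrable_F) auto
  moreover have "u t (discounted Y t x) - u t (discounted X t x)
      \<le> (discounted Y t x - discounted X t x) * marginal X t x" for x
    using strictly_concave_tangent[OF u_conc[rule_format, OF t]
        u_deriv[rule_format, OF t, of "discounted X t x"], of "discounted Y t x"]
    by (simp add: algebra_simps)
  ultimately have "(\<integral>x. u t (discounted Y t x) - u t (discounted X t x) \<partial>M)
      \<le> (\<integral>x. (discounted Y t x - discounted X t x) * marginal X t x \<partial>M)"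
    using utility_integrable[OF X t] utility_integrable[OF Y t] by (intro integral_mono) auto
  then show ?thesis
    using utility_integrable[OF X t] utility_integrable[OF Y t] by simp
qed

lemma martingale_pairing:
  assumes mart: "martingale_upto M F T Z" and t: "t \<in> {1..T}"
    and LD: "Linfty M (F t) D" and LZ: "Linfty M (F T) (Z T)"
  shows "(\<integral>x. D x * Z t x \<partial>M) = (\<integral>x. D x * Z T x \<partial>M)"
proof -
  have tT: "t \<le> T" using t by auto
  show ?thesis
  proof (rule sigma_finite_subalgebra.integral_mult_cond_exp_eq[OF cond_exp_subalgebra[OF tT]])
    show "D \<in> borel_measurable (F t)" using LD by (rule Linfty_measurable)
    show "Z t \<in> borel_measurable M"
      using mart t measurable_from_subalg[OF subalg[OF tT]] unfolding martingale_upto_def by blast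
    show "Z T \<in> borel_measurable M"
      using Linfty_M[OF order.refl LZ] by (rule Linfty_measurable)
    show "AE x in M. real_cond_exp M (F t) (Z T) x = Z t x"
      using mart t tT unfolding martingale_upto_def by auto
    show "integrable M (\<lambda>x. D x * Z T x)"
      using Linfty_mult[OF Linfty_mono[OF tT order.refl LD] LZ]
      by (rule Linfty_integrable_F[OF order.refl])
  qed
qed

lemma utility_gain_bound:
  assumes X: "X \<in> allocations M F T r W" and Y: "Y \<in> allocations M F T r W"
    and lam: "\<forall>t\<in>{1..T}. lam t > 0"
    and mart: "martingale_upto M F T (\<lambda>t x. lam t * marginal X t x)"
    and t: "t \<in> {1..T}"
  shows "lam t * (expected_utility Y t - expected_utility X t)
    \<le> (\<integral>x. (discounted Y t x - discounted X t x) * (lam T * marginal X T x) \<partial>M)"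
proof -
  have TT: "T \<in> {1..T}" using t by auto
  have "lam t * (expected_utility Y t - expected_utility X t)
      \<le> lam t * (\<integral>x. (discounted Y t x - discounted X t x) * marginal X t x \<partial>M)"
    using expected_utility_tangent[OF X Y t] lam t by (intro mult_left_mono) (auto intro: less_imp_le)
  also have "\<dots> = (\<integral>x. (discounted Y t x - discounted X t x) * (lam t * marginal X t x) \<partial>M)"
    unfolding integral_mult_right_zero[symmetric] by (simp add: mult.left_commute)
  also have "\<dots> = (\<integral>x. (discounted Y t x - discounted X t x) * (lam T * marginal X T x) \<partial>M)"
    using Linfty_diff[OF discounted_Linfty[OF Y t] discounted_Linfty[OF X t]]
      Linfty_cmult[OF marginal_Linfty[OF X TT]]
    by (rule martingale_pairing[OF mart t])
  finally show ?thesis .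
qed

text \<open>Two allocations of the same endowment have the same total discounted
  consumption, so pricing their difference with any bounded \<open>Z\<close> gives zero.\<close>
lemma budget_pairing_zero:
  assumes X: "X \<in> allocations M F T r W" and Y: "Y \<in> allocations M F T r W"
    and LZ: "Linfty M M Z"
  shows "(\<Sum>t\<in>{1..T}. \<integral>x. (discounted Y t x - discounted X t x) * Z x \<partial>M) = 0"
proof -
  have LD: "Linfty M M (\<lambda>x. (discounted Y t x - discounted X t x) * Z x)" if "t \<in> {1..T}" for t
  proof -
    have "Linfty M (F t) (\<lambda>x. discounted Y t x - discounted X t x)"
      using discounted_Linfty[OF Y that] discounted_Linfty[OF X that] by (rule Linfty_diff)
    then have "Linfty M M (\<lambda>x. discounted Y t x - discounted X t x)"
      using that Linfty_M by auto
    then show ?thesis using LZ by (rule Linfty_mult)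
  qed
  have "(\<Sum>t\<in>{1..T}. \<integral>x. (discounted Y t x - discounted X t x) * Z x \<partial>M)
      = (\<integral>x. (\<Sum>t\<in>{1..T}. (discounted Y t x - discounted X t x) * Z x) \<partial>M)"
    using Linfty_integrable[OF prob LD] by (rule Bochner_Integration.integral_sum[symmetric])
  also have "\<dots> = (\<integral>x. (\<Sum>t\<in>{1..T}. discounted Y t x - discounted X t x) * Z x \<partial>M)"
    by (simp add: sum_distrib_right)
  also have "\<dots> = (\<integral>x. 0 \<partial>M)"
  proof (rule integral_cong_AE)
    show "(\<lambda>x. (\<Sum>t\<in>{1..T}. discounted Y t x - discounted X t x) * Z x) \<in> borel_measurable M"
      unfolding sum_distrib_right using LD by (intro borel_measurable_sum Linfty_measurable[of M]) auto
    have "AE x in M. (\<Sum>t\<in>{1..T}. discounted Y t x) = W x"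
      "AE x in M. (\<Sum>t\<in>{1..T}. discounted X t x) = W x"
      using X Y unfolding allocations_def by auto
    then show "AE x in M. (\<Sum>t\<in>{1..T}. discounted Y t x - discounted X t x) * Z x = 0"
      by eventually_elim (simp add: sum_subtractf)
  qed simp
  finally show ?thesis by simp
qed

text \<open>Sufficiency: summing the bounds over all agents, a dominating allocation
  would have positive weighted gain but zero value.\<close>
theorem martingale_imp_pareto_optimal:
  assumes X: "X \<in> allocations M F T r W" and lam: "\<forall>t\<in>{1..T}. lam t > 0"
    and mart: "martingale_upto M F T (\<lambda>t x. lam t * marginal X t x)"
  shows "pareto_optimal M F T r u W X"
  unfolding pareto_optimal_def
proof (intro conjI notI X)
  assume "\<exists>Y\<in>allocations M F T r W.
    (\<forall>t\<in>{1..T}. expected_utility X t \<le> expected_utility Y t) \<and>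
    (\<exists>t0\<in>{1..T}. expected_utility X t0 < expected_utility Y t0)"
  then obtain Y t0 where Y: "Y \<in> allocations M F T r W"
    and dominates: "\<forall>t\<in>{1..T}. expected_utility X t \<le> expected_utility Y t"
    and t0: "t0 \<in> {1..T}" "expected_utility X t0 < expected_utility Y t0"
    by blast
  have LmT: "Linfty M M (\<lambda>x. lam T * marginal X T x)"
    using T_pos Linfty_M[OF order.refl Linfty_cmult[OF marginal_Linfty[OF X]]] by auto
  have gain_nonneg: "0 \<le> lam t * (expected_utility Y t - expected_utility X t)"
    if "t \<in> {1..T}" for t
    using lam dominates that by (simp add: less_imp_le)
  have gain_pos: "0 < lam t0 * (expected_utility Y t0 - expected_utility X t0)"
    using lam t0 by simp
  have "0 < (\<Sum>t\<in>{1..T}. lam t * (expected_utility Y t - expected_utility X t))"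
    using gain_pos gain_nonneg t0(1) by (intro sum_pos2[of "{1..T}" t0]) auto
  also have "\<dots> \<le> (\<Sum>t\<in>{1..T}.
      \<integral>x. (discounted Y t x - discounted X t x) * (lam T * marginal X T x) \<partial>M)"
    by (rule sum_mono, rule utility_gain_bound[OF X Y lam mart])
  also have "\<dots> = 0" by (rule budget_pairing_zero[OF X Y LmT])
  finally show False by simp
qed

end

section \<open>Necessity of the martingale condition\<close>

lemma ratios_equal_if_no_separating_combination:
  fixes a b a' b' :: real
  assumes a: "0 < a" "0 < a'"
    and no_sep: "\<And>\<alpha> \<beta>. 0 < \<alpha> * b + \<beta> * a \<Longrightarrow> 0 \<le> \<alpha> * b' + \<beta> * a'"
  shows "b' / a' = b / a"
proof (rule ccontr)
  define D where "D = b * a' - b' * a"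
  assume "b' / a' \<noteq> b / a"
  then have D: "D \<noteq> 0" using a unfolding D_def by (auto simp: field_simps)
  define \<alpha> where "\<alpha> = (a' + a) / D"
  define \<beta> where "\<beta> = - (b' + b) / D"
  have "(a' + a) * b - (b' + b) * a = D" and "(a' + a) * b' - (b' + b) * a' = - D"
    unfolding D_def by (simp_all add: algebra_simps)
  then have "\<alpha> * b + \<beta> * a = 1" and "\<alpha> * b' + \<beta> * a' = -1"
    using D unfolding \<alpha>_def \<beta>_def by (simp_all add: field_simps)
  then show False using no_sep[of \<alpha> \<beta>] by simp
qed

text \<open>The reallocation that gives agent \<open>s\<close> the extra discounted amount \<open>Z\<close> and
  takes it from agent \<open>t\<close>.\<close>
definition exchange :: "nat \<Rightarrow> nat \<Rightarrow> ('a \<Rightarrow> real) \<Rightarrow> nat \<Rightarrow> 'a \<Rightarrow> real" where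
  "exchange s t Z k x = (if k = s then Z x else if k = t then - Z x else 0)"

lemma sum_exchange:
  assumes "finite I" "s \<in> I" "t \<in> I" "s \<noteq> t"
  shows "(\<Sum>k\<in>I. exchange s t Z k x) = 0"
proof -
  have "(\<Sum>k\<in>I. exchange s t Z k x)
      = (\<Sum>k\<in>I. if k = s then Z x else 0) + (\<Sum>k\<in>I. if k = t then - Z x else 0)"
    unfolding exchange_def sum.distrib[symmetric] using assms(4) by (intro sum.cong) auto
  then show ?thesis using assms by simp
qed

context risk_sharing
begin

definition transfer :: "(nat \<Rightarrow> 'a \<Rightarrow> real) \<Rightarrow> nat \<Rightarrow> nat \<Rightarrow> ('a \<Rightarrow> real) \<Rightarrow> nat \<Rightarrow> 'a \<Rightarrow> real" where
  "transfer X s t Z k x = X k x + disc r k x * exchange s t Z k x"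

text \<open>An exchange from a later agent to an earlier one is adapted, because what
  is known at date \<open>s\<close> is also known at date \<open>t \<ge> s\<close>.\<close>
lemma exchange_Linfty:
  assumes "s \<le> t" "t \<le> T" "Linfty M (F s) Z"
  shows "Linfty M (F k) (exchange s t Z k)"
  using assms(3) Linfty_uminus[OF Linfty_mono[OF assms]] Linfty_const[of M "F k" 0]
  unfolding exchange_def[abs_def] by (cases "k = s"; cases "k = t") simp_all

text \<open>Since \<open>B\<^sub>k \<ge> 1\<close>, the transfer changes discounted consumption exactly by
  the exchange.\<close>
lemma transfer_discounted:
  "AE x in M. \<forall>k\<in>{1..T}. discounted (transfer X s t Z) k x = discounted X k x + exchange s t Z k x"
  using disc_ge_1 by (rule eventually_mono) (auto simp: transfer_def field_simps)

lemma transfer_allocation: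
  assumes X: "X \<in> allocations M F T r W" and s: "s \<in> {1..T}" and t: "t \<in> {1..T}"
    and st: "s < t" and LZ: "Linfty M (F s) Z"
  shows "transfer X s t Z \<in> allocations M F T r W"
  unfolding allocations_def
proof (intro CollectI conjI ballI)
  fix k assume "k \<in> {1..T}"
  then show "Linfty M (F k) (transfer X s t Z k)"
    using X exchange_Linfty[OF less_imp_le[OF st] _ LZ] t disc_Linfty
    unfolding transfer_def[abs_def] allocations_def by (intro Linfty_add Linfty_mult) auto
next
  have "AE x in M. (\<Sum>k\<in>{1..T}. discounted X k x) = W x"
    using X unfolding allocations_def by auto
  then show "AE x in M. (\<Sum>k\<in>{1..T}. discounted (transfer X s t Z) k x) = W x"
    using transfer_discounted[of X s t Z]
  proof eventually_elim
    case (elim x)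
    have "(\<Sum>k\<in>{1..T}. discounted (transfer X s t Z) k x)
        = (\<Sum>k\<in>{1..T}. discounted X k x) + (\<Sum>k\<in>{1..T}. exchange s t Z k x)"
      using elim(2) by (simp add: sum.distrib)
    also have "(\<Sum>k\<in>{1..T}. exchange s t Z k x) = 0"
      using s t st by (intro sum_exchange) auto
    finally show ?case using elim(1) by simp
  qed
qed

lemma transfer_expected_utility:
  assumes X: "X \<in> allocations M F T r W" and s: "s \<in> {1..T}" and t: "t \<in> {1..T}"
    and st: "s < t" and LZ: "Linfty M (F s) Z" and k: "k \<in> {1..T}"
  shows "expected_utility (transfer X s t Z) k
    = (\<integral>x. u k (discounted X k x + exchange s t Z k x) \<partial>M)"
proof (rule integral_cong_AE)
  have kT: "k \<le> T" using k by auto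
  show "(\<lambda>x. u k (discounted (transfer X s t Z) k x)) \<in> borel_measurable M"
    using Linfty_M[OF kT Linfty_comp[OF u_cont[OF k]
        discounted_Linfty[OF transfer_allocation[OF X s t st LZ] k]]]
    by (rule Linfty_measurable)
  have "Linfty M (F k) (\<lambda>x. discounted X k x + exchange s t Z k x)"
    using discounted_Linfty[OF X k] exchange_Linfty[OF less_imp_le[OF st] _ LZ] t
    by (intro Linfty_add) auto
  then show "(\<lambda>x. u k (discounted X k x + exchange s t Z k x)) \<in> borel_measurable M"
    using Linfty_M[OF kT Linfty_comp[OF u_cont[OF k]]] by (blast intro: Linfty_measurable)
  show "AE x in M. u k (discounted (transfer X s t Z) k x) = u k (discounted X k x + exchange s t Z k x)"
    using transfer_discounted[of X s t Z] by (rule eventually_mono) (use k in auto)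
qed

lemma pareto_no_mutually_beneficial_exchange:
  assumes po: "pareto_optimal M F T r u W X"
    and s: "s \<in> {1..T}" and t: "t \<in> {1..T}" and st: "s < t"
    and LZ: "Linfty M (F s) Z"
    and gain_s: "(\<integral>x. u s (discounted X s x + Z x) \<partial>M) > expected_utility X s"
    and gain_t: "(\<integral>x. u t (discounted X t x - Z x) \<partial>M) > expected_utility X t"
  shows False
proof -
  have X: "X \<in> allocations M F T r W" using po unfolding pareto_optimal_def by blast
  define Y where "Y = transfer X s t Z"
  have Y: "Y \<in> allocations M F T r W"
    unfolding Y_def by (rule transfer_allocation[OF X s t st LZ])
  have EU_Y: "expected_utility Y k = (\<integral>x. u k (discounted X k x + exchange s t Z k x) \<partial>M)"
    if "k \<in> {1..T}" for k
    unfolding Y_def by (rule transfer_expected_utility[OF X s t st LZ that])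
  have "\<forall>k\<in>{1..T}. expected_utility X k \<le> expected_utility Y k"
  proof
    fix k assume k: "k \<in> {1..T}"
    then show "expected_utility X k \<le> expected_utility Y k"
      using EU_Y[OF k] gain_s gain_t st
      by (cases "k = s"; cases "k = t") (simp_all add: exchange_def)
  qed
  moreover have "expected_utility X s < expected_utility Y s"
    using EU_Y[OF s] gain_s by (simp add: exchange_def)
  ultimately show False
    using po Y s unfolding pareto_optimal_def by blast
qed

text \<open>Otherwise a small enough exchange would benefit both.\<close>
lemma pareto_first_order_condition:
  assumes po: "pareto_optimal M F T r u W X"
    and s: "s \<in> {1..T}" and t: "t \<in> {1..T}" and st: "s < t"
    and LZ: "Linfty M (F s) Z"
    and pos: "0 < (\<integral>x. Z x * marginal X s x \<partial>M)"
  shows "0 \<le> (\<integral>x. Z x * marginal X t x \<partial>M)"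
proof (rule ccontr)
  assume "\<not> ?thesis"
  then have neg: "0 < (\<integral>x. - Z x * marginal X t x \<partial>M)" by simp
  have X: "X \<in> allocations M F T r W" using po unfolding pareto_optimal_def by blast
  have sT: "s \<le> T" and tT: "t \<le> T" using s t by auto
  have LZt: "Linfty M M (\<lambda>x. - Z x)"
    using Linfty_M[OF tT Linfty_uminus[OF Linfty_mono[OF less_imp_le[OF st] tT LZ]]] .
  have e_s: "eventually (\<lambda>n. (\<integral>x. u s (discounted X s x + Z x / real (Suc n)) \<partial>M)
      > expected_utility X s) sequentially"
    using u_conc u_deriv u'_cont s pos
    by (intro small_perturbation_improves[OF prob Linfty_M[OF sT discounted_Linfty[OF X s]]
          Linfty_M[OF sT LZ]]) auto
  have e_t: "eventually (\<lambda>n. (\<integral>x. u t (discounted X t x + - Z x / real (Suc n)) \<partial>M)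
      > expected_utility X t) sequentially"
    using u_conc u_deriv u'_cont t neg
    by (intro small_perturbation_improves[OF prob Linfty_M[OF tT discounted_Linfty[OF X t]] LZt])
      auto
  obtain n
    where gain_s: "(\<integral>x. u s (discounted X s x + Z x / real (Suc n)) \<partial>M) > expected_utility X s"
      and gain_t: "(\<integral>x. u t (discounted X t x + - Z x / real (Suc n)) \<partial>M) > expected_utility X t"
    using eventually_conj[OF e_s e_t] eventually_sequentially by auto
  have "Linfty M (F s) (\<lambda>x. Z x / real (Suc n))"
    using Linfty_mult[OF LZ Linfty_const[of M "F s" "1 / real (Suc n)"]] by simp
  then show False
    using gain_s gain_t by (intro pareto_no_mutually_beneficial_exchange[OF po s t st]) simp_all
qed

text \<open>Expected marginal utilities are positive, so they can serve as normalisers.\<close>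
lemma marginal_expectation_pos:
  assumes X: "X \<in> allocations M F T r W" and k: "k \<in> {1..T}"
  shows "0 < (\<integral>x. marginal X k x \<partial>M)"
proof -
  interpret prob_space M by (rule prob)
  have "(\<integral>x. 0 \<partial>M) < (\<integral>x. marginal X k x \<partial>M)"
    using u'_pos k Linfty_integrable_F marginal_Linfty[OF X k]
    by (intro integral_less_AE_space) (auto simp: emeasure_space_1)
  then show ?thesis by simp
qed

text \<open>Consequence of the first-order condition: for \<open>s < t\<close> the normalised
  marginal utilities \<open>m\<^sub>s / E m\<^sub>s\<close> and \<open>m\<^sub>t / E m\<^sub>t\<close> have the same integral over
  every event known at date \<open>s\<close> (test with \<open>Z = \<alpha> 1\<^sub>A + \<beta>\<close>).\<close>
lemma pareto_normalized_marginals_agree: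
  assumes po: "pareto_optimal M F T r u W X"
    and s: "s \<in> {1..T}" and t: "t \<in> {1..T}" and st: "s < t" and A: "A \<in> sets (F s)"
  shows "(\<integral>x. indicator A x * marginal X t x \<partial>M) / (\<integral>x. marginal X t x \<partial>M)
    = (\<integral>x. indicator A x * marginal X s x \<partial>M) / (\<integral>x. marginal X s x \<partial>M)"
proof (rule ratios_equal_if_no_separating_combination)
  have X: "X \<in> allocations M F T r W" using po unfolding pareto_optimal_def by blast
  show "0 < (\<integral>x. marginal X s x \<partial>M)" "0 < (\<integral>x. marginal X t x \<partial>M)"
    using marginal_expectation_pos[OF X] s t by auto
  have AM: "A \<in> sets M" using A subalg[of s] s unfolding subalgebra_def by auto
  have pairing: "(\<integral>x. (\<alpha> * indicator A x + \<beta>) * marginal X k x \<partial>M)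
      = \<alpha> * (\<integral>x. indicator A x * marginal X k x \<partial>M) + \<beta> * (\<integral>x. marginal X k x \<partial>M)"
    if k: "k \<in> {1..T}" for k \<alpha> \<beta>
  proof -
    have int: "integrable M (\<lambda>x. marginal X k x)"
      using k by (intro Linfty_integrable_F[OF _ marginal_Linfty[OF X k]]) auto
    have "(\<integral>x. (\<alpha> * indicator A x + \<beta>) * marginal X k x \<partial>M)
        = (\<integral>x. \<alpha> * (indicator A x * marginal X k x) + \<beta> * marginal X k x \<partial>M)"
      by (simp add: algebra_simps)
    also have "\<dots> = \<alpha> * (\<integral>x. indicator A x * marginal X k x \<partial>M) + \<beta> * (\<integral>x. marginal X k x \<partial>M)"
      using integrable_mult_indicator[OF AM int] int by simp
    finally show ?thesis .
  qed
  fix \<alpha> \<beta> :: real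
  assume "0 < \<alpha> * (\<integral>x. indicator A x * marginal X s x \<partial>M) + \<beta> * (\<integral>x. marginal X s x \<partial>M)"
  then have "0 < (\<integral>x. (\<alpha> * indicator A x + \<beta>) * marginal X s x \<partial>M)"
    using pairing[OF s] by simp
  moreover have "Linfty M (F s) (\<lambda>x. \<alpha> * indicator A x + \<beta>)"
    by (intro Linfty_add Linfty_cmult Linfty_indicator A Linfty_const)
  ultimately have "0 \<le> (\<integral>x. (\<alpha> * indicator A x + \<beta>) * marginal X t x \<partial>M)"
    using pareto_first_order_condition[OF po s t st] by blast
  then show "0 \<le> \<alpha> * (\<integral>x. indicator A x * marginal X t x \<partial>M) + \<beta> * (\<integral>x. marginal X t x \<partial>M)"
    using pairing[OF t] by simp
qed

text \<open>Necessity: the normalised marginal utilities \<open>m\<^sub>t / E m\<^sub>t\<close> form a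
  martingale, by the characterisation of conditional expectation via integrals
  over the events of \<open>F\<^sub>s\<close>.\<close>
theorem pareto_optimal_imp_martingale:
  assumes po: "pareto_optimal M F T r u W X"
  shows "\<exists>lam. (\<forall>t\<in>{1..T}. lam t > 0) \<and> martingale_upto M F T (\<lambda>t x. lam t * marginal X t x)"
proof (intro exI conjI)
  have X: "X \<in> allocations M F T r W" using po unfolding pareto_optimal_def by blast
  define lam where "lam k = 1 / (\<integral>x. marginal X k x \<partial>M)" for k
  show "\<forall>t\<in>{1..T}. lam t > 0"
    using marginal_expectation_pos[OF X] unfolding lam_def by auto
  have LZ: "Linfty M (F k) (\<lambda>x. lam k * marginal X k x)" if "k \<in> {1..T}" for k
    using marginal_Linfty[OF X that] by (rule Linfty_cmult)
  have int: "integrable M (\<lambda>x. lam k * marginal X k x)" if "k \<in> {1..T}" for k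
    using that LZ[OF that] by (intro Linfty_integrable_F) auto
  have set_integral: "(\<integral>x\<in>A. lam k * marginal X k x \<partial>M)
      = (\<integral>x. indicator A x * marginal X k x \<partial>M) / (\<integral>x. marginal X k x \<partial>M)" for k A
    unfolding set_lebesgue_integral_def lam_def by (simp add: mult_ac)
  show "martingale_upto M F T (\<lambda>t x. lam t * marginal X t x)"
    unfolding martingale_upto_def
  proof (intro conjI ballI impI)
    fix k assume k: "k \<in> {1..T}"
    show "integrable M (\<lambda>x. lam k * marginal X k x)" by (rule int[OF k])
    show "(\<lambda>x. lam k * marginal X k x) \<in> borel_measurable (F k)"
      using LZ[OF k] by (rule Linfty_measurable)
  next
    fix s t assume s: "s \<in> {1..T}" and t: "t \<in> {1..T}" and "s \<le> t"
    interpret sigma_finite_subalgebra M "F s" using s by (intro cond_exp_subalgebra) auto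
    have meas_s: "(\<lambda>x. lam s * marginal X s x) \<in> borel_measurable (F s)"
      using LZ[OF s] by (rule Linfty_measurable)
    show "AE x in M. real_cond_exp M (F s) (\<lambda>x. lam t * marginal X t x) x = lam s * marginal X s x"
    proof (cases "s = t")
      case True
      then show ?thesis using real_cond_exp_F_meas[OF int[OF s] meas_s] by simp
    next
      case False
      with \<open>s \<le> t\<close> have "s < t" by simp
      show ?thesis
        using set_integral pareto_normalized_marginals_agree[OF po s t \<open>s < t\<close>]
        by (intro real_cond_exp_charact int s t meas_s) simp
    qed
  qed
qed

end

theorem theorem2p14:
  fixes M :: "'a measure" and F :: "nat \<Rightarrow> 'a measure" and T :: nat
    and r :: "nat \<Rightarrow> 'a \<Rightarrow> real"
    and u u' :: "nat \<Rightarrow> real \<Rightarrow> real"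
    and W :: "'a \<Rightarrow> real" and X :: "nat \<Rightarrow> 'a \<Rightarrow> real"
  assumes "prob_space M"
    and "T \<ge> 1"
    and "filtration_upto M F T"
    and r_pred: "\<forall>t\<in>{1..T}. r t \<in> borel_measurable (F (t - 1))"
    and r_bdd: "\<exists>C. \<forall>t\<in>{1..T}. AE x in M. \<bar>r t x\<bar> \<le> C"
    and r_nonneg: "\<forall>t\<in>{1..T}. AE x in M. r t x \<ge> 0"
    and u_conc: "\<forall>t\<in>{1..T}. strictly_concave_on UNIV (u t)"
    and u_deriv: "\<forall>t\<in>{1..T}. \<forall>y. (u t has_real_derivative u' t y) (at y)"
    and u'_cont: "\<forall>t\<in>{1..T}. continuous_on UNIV (u' t)"
    and u'_pos: "\<forall>t\<in>{1..T}. \<forall>y. u' t y > 0"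
    and W: "Linfty M (F T) W"
    and X: "X \<in> allocations M F T r W"
  shows "pareto_optimal M F T r u W X \<longleftrightarrow>
    (\<exists>lam :: nat \<Rightarrow> real. (\<forall>t\<in>{1..T}. lam t > 0) \<and>
       martingale_upto M F T (\<lambda>t x. lam t * u' t (X t x / disc r t x)))"
proof -
  interpret risk_sharing M F T r u u'
    using assms(1-10) by (rule risk_sharing.intro)
  show ?thesis
  proof
    assume "pareto_optimal M F T r u W X"
    then show "\<exists>lam. (\<forall>t\<in>{1..T}. lam t > 0) \<and> martingale_upto M F T (\<lambda>t x. lam t * marginal X t x)"
      by (rule pareto_optimal_imp_martingale)
  next
    assume "\<exists>lam. (\<forall>t\<in>{1..T}. lam t > 0) \<and> martingale_upto M F T (\<lambda>t x. lam t * marginal X t x)"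
    then show "pareto_optimal M F T r u W X"
      by (elim exE conjE) (rule martingale_imp_pareto_optimal[OF X])
  qed
qed

end
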